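(* Let $X\subset\mathbb{R}^n$ be closed, equal to the closure of its interior, and invariant under translation by a vector $v\in\mathbb{R}^n$ (i.e. $x\in X\Rightarrow x+\lambda v\in X$ for all $\lambda\in\mathbb{R}$), and let $f:X\to\mathbb{R}^n$ be locally Lipschitz, with flow $\varphi_t$ of $\dot x=f(x)$ (solutions unique and maximally defined, defined at least for all $t\ge 0$). Then the flow satisfies $\varphi_t(\xi+\lambda v)=\varphi_t(\xi)+\lambda v$ for all $\lambda\in\mathbb{R}$, all $\xi\in X$ and all admissible $t$ if and only if: for all $x_1,x_2\in X$ with $x_1-x_2\in\operatorname{span}\{v\}$ one has $f(x_1)=f(x_2)$. *)

theory Defs
  imports "HOL-Analysis.Analysis"
begin

definition locally_lipschitz_on :: "'a::metric_space set \<Rightarrow> ('a \<Rightarrow> 'b::metric_space) \<Rightarrow> bool" where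
  "locally_lipschitz_on X f \<longleftrightarrow>
     (\<forall>x\<in>X. \<exists>e>0. \<exists>L. \<forall>y\<in>X \<inter> ball x e. \<forall>z\<in>X \<inter> ball x e. dist (f y) (f z) \<le> L * dist y z)"

definition is_solution_on ::
  "('a::real_normed_vector \<Rightarrow> 'a) \<Rightarrow> 'a set \<Rightarrow> real set \<Rightarrow> (real \<Rightarrow> 'a) \<Rightarrow> bool" where
  "is_solution_on f X I y \<longleftrightarrow> is_interval I \<and>
     (\<forall>t\<in>I. y t \<in> X \<and> (y has_vector_derivative f (y t)) (at t within I))"

definition is_max_flow ::
  "('a::real_normed_vector \<Rightarrow> 'a) \<Rightarrow> 'a set \<Rightarrow> ('a \<Rightarrow> real set) \<Rightarrow> (real \<Rightarrow> 'a \<Rightarrow> 'a) \<Rightarrow> bool" where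
  "is_max_flow f X J phi \<longleftrightarrow>
     (\<forall>\<xi>\<in>X. {0..} \<subseteq> J \<xi> \<and> phi 0 \<xi> = \<xi> \<and> is_solution_on f X (J \<xi>) (\<lambda>t. phi t \<xi>) \<and>
        (\<forall>I y. is_solution_on f X I y \<and> 0 \<in> I \<and> y 0 = \<xi> \<longrightarrow>
               I \<subseteq> J \<xi> \<and> (\<forall>t\<in>I. y t = phi t \<xi>)))"

end

theory Submission
  imports Defs
begin

text \<open>If f is invariant along v, the translate of a solution by c v is again a solution, so by
  uniqueness of maximal solutions the flow commutes with the translation. Conversely, differentiating
  \<open>\<phi>\<^sub>t(\<xi> + c v) = \<phi>\<^sub>t(\<xi>) + c v\<close> from the right at t = 0 gives \<open>f(\<xi> + c v) = f(\<xi>)\<close>.\<close>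

lemma max_flow_solution:
  assumes "is_max_flow f X J phi" and "\<xi> \<in> X"
  shows "{0..} \<subseteq> J \<xi>" and "phi 0 \<xi> = \<xi>" and "is_solution_on f X (J \<xi>) (\<lambda>t. phi t \<xi>)"
  using assms unfolding is_max_flow_def by auto

lemma max_flow_unique:
  assumes "is_max_flow f X J phi" and "\<xi> \<in> X"
    and "is_solution_on f X I y" and "0 \<in> I" and "y 0 = \<xi>" and "t \<in> I"
  shows "y t = phi t \<xi>"
  using assms unfolding is_max_flow_def by blast

lemma max_flow_has_vector_derivative_at_0:
  assumes "is_max_flow f X J phi" and "\<xi> \<in> X"
  shows "((\<lambda>t. phi t \<xi>) has_vector_derivative f \<xi>) (at 0 within {0..})"
proof -
  have "(\<lambda>t. phi t \<xi>) 0 = \<xi>" and "0 \<in> J \<xi>" and "{0..} \<subseteq> J \<xi>"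
    using max_flow_solution[OF assms] by auto
  moreover have "\<forall>t\<in>J \<xi>. ((\<lambda>t. phi t \<xi>) has_vector_derivative f (phi t \<xi>)) (at t within J \<xi>)"
    using max_flow_solution(3)[OF assms] unfolding is_solution_on_def by blast
  ultimately show ?thesis
    by (metis has_vector_derivative_within_subset)
qed

lemma is_solution_on_translate:
  assumes "is_solution_on f X I y"
    and "\<And>x. x \<in> X \<Longrightarrow> x + a \<in> X" and "\<And>x. x \<in> X \<Longrightarrow> f (x + a) = f x"
  shows "is_solution_on f X I (\<lambda>t. y t + a)"
  unfolding is_solution_on_def
proof (intro conjI ballI)
  show "is_interval I"
    using assms(1) unfolding is_solution_on_def by blast
next
  fix s assume "s \<in> I"
  then have ys: "y s \<in> X" and "(y has_vector_derivative f (y s)) (at s within I)"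
    using assms(1) unfolding is_solution_on_def by auto
  then have "((\<lambda>t. y t + a) has_vector_derivative f (y s)) (at s within I)"
    by (auto intro: derivative_eq_intros)
  then show "((\<lambda>t. y t + a) has_vector_derivative f (y s + a)) (at s within I)"
    using assms(3)[OF ys] by simp
  show "y s + a \<in> X"
    using assms(2)[OF ys] .
qed

lemma max_flow_translate:
  assumes flow: "is_max_flow f X J phi"
    and X_inv: "\<And>x. x \<in> X \<Longrightarrow> x + a \<in> X" and f_inv: "\<And>x. x \<in> X \<Longrightarrow> f (x + a) = f x"
    and "\<xi> \<in> X" and "t \<in> J \<xi>"
  shows "phi t (\<xi> + a) = phi t \<xi> + a"
proof -
  have "is_solution_on f X (J \<xi>) (\<lambda>t. phi t \<xi> + a)"
    by (rule is_solution_on_translate[OF max_flow_solution(3)[OF flow \<open>\<xi> \<in> X\<close>] X_inv f_inv])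
  moreover have "0 \<in> J \<xi>" and "phi 0 \<xi> + a = \<xi> + a"
    using max_flow_solution(1,2)[OF flow \<open>\<xi> \<in> X\<close>] by auto
  ultimately show ?thesis
    using max_flow_unique[OF flow X_inv[OF \<open>\<xi> \<in> X\<close>]] \<open>t \<in> J \<xi>\<close> by metis
qed

lemma max_flow_translate_imp_field_eq:
  assumes flow: "is_max_flow f X J phi" and "\<xi> \<in> X" and "\<xi> + a \<in> X"
    and commute: "\<And>t. t \<ge> 0 \<Longrightarrow> phi t (\<xi> + a) = phi t \<xi> + a"
  shows "f (\<xi> + a) = f \<xi>"
proof -
  have "((\<lambda>t. phi t \<xi> + a) has_vector_derivative f \<xi>) (at 0 within {0..})"
    using max_flow_has_vector_derivative_at_0[OF flow \<open>\<xi> \<in> X\<close>]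
    by (auto intro: derivative_eq_intros)
  moreover have "((\<lambda>t. phi t \<xi> + a) has_vector_derivative f (\<xi> + a)) (at 0 within {0..})"
    using max_flow_has_vector_derivative_at_0[OF flow \<open>\<xi> + a \<in> X\<close>]
    by (rule has_vector_derivative_transform[rotated 2]) (auto simp: commute)
  moreover have "\<not> trivial_limit (at (0::real) within {0..})"
    by (simp add: at_within_Ici_at_right)
  ultimately show ?thesis
    using vector_derivative_unique_within by metis
qed

text \<open>Only the translation invariance of X and the flow hypothesis are used: uniqueness of solutions,
  which the Lipschitz condition is meant to guarantee, is already part of \<open>is_max_flow\<close>.\<close>

theorem lemma1:
  fixes X :: "(real ^ 'n) set" and v :: "real ^ 'n" and f :: "real ^ 'n \<Rightarrow> real ^ 'n"
    and J :: "real ^ 'n \<Rightarrow> real set" and phi :: "real \<Rightarrow> real ^ 'n \<Rightarrow> real ^ 'n"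
  assumes "closed X"
    and "closure (interior X) = X"
    and "\<forall>x\<in>X. \<forall>c::real. x + c *\<^sub>R v \<in> X"
    and "locally_lipschitz_on X f"
    and "is_max_flow f X J phi"
  shows "(\<forall>\<xi>\<in>X. \<forall>c::real. \<forall>t\<in>J \<xi>. phi t (\<xi> + c *\<^sub>R v) = phi t \<xi> + c *\<^sub>R v)
     \<longleftrightarrow> (\<forall>x1\<in>X. \<forall>x2\<in>X. x1 - x2 \<in> span {v} \<longrightarrow> f x1 = f x2)"
proof
  assume commute: "\<forall>\<xi>\<in>X. \<forall>c::real. \<forall>t\<in>J \<xi>. phi t (\<xi> + c *\<^sub>R v) = phi t \<xi> + c *\<^sub>R v"
  show "\<forall>x1\<in>X. \<forall>x2\<in>X. x1 - x2 \<in> span {v} \<longrightarrow> f x1 = f x2"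
  proof (intro ballI impI)
    fix x1 x2 assume "x1 \<in> X" "x2 \<in> X" "x1 - x2 \<in> span {v}"
    then obtain c where "x1 - x2 = c *\<^sub>R v"
      by (auto simp: span_singleton)
    then have x1: "x1 = x2 + c *\<^sub>R v"
      by (simp add: algebra_simps)
    have "t \<ge> 0 \<Longrightarrow> phi t (x2 + c *\<^sub>R v) = phi t x2 + c *\<^sub>R v" for t
      using commute max_flow_solution(1)[OF assms(5) \<open>x2 \<in> X\<close>] \<open>x2 \<in> X\<close> by auto
    then show "f x1 = f x2"
      using max_flow_translate_imp_field_eq[OF assms(5) \<open>x2 \<in> X\<close>] \<open>x1 \<in> X\<close> x1 by blast
  qed
next
  assume "\<forall>x1\<in>X. \<forall>x2\<in>X. x1 - x2 \<in> span {v} \<longrightarrow> f x1 = f x2"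
  then have "f (x + c *\<^sub>R v) = f x" if "x \<in> X" for x c
    using assms(3) that by (simp add: span_base span_scale)
  then show "\<forall>\<xi>\<in>X. \<forall>c::real. \<forall>t\<in>J \<xi>. phi t (\<xi> + c *\<^sub>R v) = phi t \<xi> + c *\<^sub>R v"
    using max_flow_translate[OF assms(5)] assms(3) by blast
qed

end
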